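(* Let $D_L\in\mathbb{R}_{\ge0}^{l\times l}$ be symmetric with zero diagonal, $D_N\in\mathbb{R}_{\ge0}^{m\times l}$, $d\ge1$ an integer and $\kappa>0$. Suppose $A_L=\cosh(\sqrt{\kappa}D_L)$ has at least $d$ strictly negative eigenvalues. Then the matrices $\hat X_L,\hat X_N$ returned by L-hydra$(D_L,D_N,d,\kappa)$ satisfy: (i) $\hat X_L$ minimizes $\|A_L - X_L J X_L^\top\|_F$ over all $X_L\in\mathbb{R}^{l\times(d+1)}$; (ii) $\hat X_N$ minimizes $\|A_N - X_N J \hat X_L^\top\|_F$ over all $X_N\in\mathbb{R}^{m\times(d+1)}$; (iii) every entry of the first column of $\hat X_L$ and of the first column of $\hat X_N$ is strictly positive, i.e., all rows of $\hat X_L$ and $\hat X_N$ lie in the positive Lorentz space $\{\bm{x}\in\mathbb{R}^{d+1}: x_1>0\}$.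
   Context: $\|\cdot\|_F$ is the Frobenius norm. $J=\operatorname{diag}(1,-1,\dots,-1)\in\mathbb{R}^{(d+1)\times(d+1)}$. Algorithm L-hydra$(D_L,D_N,d,\kappa)$: input a symmetric $D_L\in\mathbb{R}_{\ge0}^{l\times l}$ with zero diagonal, $D_N\in\mathbb{R}_{\ge 0}^{m\times l}$, an integer $d\ge1$ and $\kappa>0$. Step 1: set $A_L=\cosh(\sqrt{\kappa}D_L)$, $A_N=\cosh(\sqrt{\kappa}D_N)$ (cosh applied entrywise) and take an eigendecomposition $A_L=Q\Lambda Q^\top$ with $Q$ orthogonal, columns $\bm{q}_1,\dots,\bm{q}_l$, and $\Lambda=\operatorname{diag}(\lambda_1,\dots,\lambda_l)$, $\lambda_1\ge\dots\ge\lambda_l$; the sign of $\bm{q}_1$ is chosen so that its entries are positive (Perron vector). Step 2: if $\lambda_{l-d+1},\dots,\lambda_l$ are not all strictly negative (or $l<d+1$), return Null; otherwise set $\hat X_L=\big[\sqrt{\lambda_1}\bm{q}_1,\ \sqrt{-\lambda_{l-d+1}}\bm{q}_{l-d+1},\ \dots,\ \sqrt{-\lambda_l}\bm{q}_l\big]\in\mathbb{R}^{l\times(d+1)}$. Step 3: set $\hat X_N=A_N\big[\bm{q}_1/\sqrt{\lambda_1},\ -\bm{q}_{l-d+1}/\sqrt{-\lambda_{l-d+1}},\ \dots,\ -\bm{q}_l/\sqrt{-\lambda_l}\big]\in\mathbb{R}^{m\times(d+1)}$. Return $\hat X=\begin{psmallmatrix}\hat X_L\\ \hat X_N\end{psmallmatrix}$.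 *)

theory Defs
  imports Complex_Main "Jordan_Normal_Form.Matrix"
begin

text \<open>Matrices are Jordan_Normal_Form matrices (type real mat) with explicit
dimensions; all indices are 0-based.\<close>

definition frob_norm :: "real mat \<Rightarrow> real" where
  "frob_norm A = sqrt (\<Sum>i<dim_row A. \<Sum>j<dim_col A. (A $$ (i,j))\<^sup>2)"

definition lorentz_J :: "nat \<Rightarrow> real mat" where
  "lorentz_J d = mat (d+1) (d+1) (\<lambda>(i,j). if i = j then (if i = 0 then 1 else -1) else 0)"

definition cosh_mat :: "real \<Rightarrow> real mat \<Rightarrow> real mat" where
  "cosh_mat \<kappa> D = map_mat (\<lambda>x. cosh (sqrt \<kappa> * x)) D"

definition diag_of :: "nat \<Rightarrow> (nat \<Rightarrow> real) \<Rightarrow> real mat" where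
  "diag_of l lam = mat l l (\<lambda>(i,j). if i = j then lam i else 0)"

text \<open>Step 1 of L-hydra: an admissible eigendecomposition A = Q Lambda Q^T with
Q orthogonal, eigenvalues sorted decreasingly (lam 0 \<ge> ... \<ge> lam (l-1)),
and the sign of the first column q_1 chosen so that its entries are positive.\<close>

definition lhydra_eigdecomp :: "nat \<Rightarrow> real mat \<Rightarrow> real mat \<Rightarrow> (nat \<Rightarrow> real) \<Rightarrow> bool" where
  "lhydra_eigdecomp l A Q lam \<longleftrightarrow>
     Q \<in> carrier_mat l l \<and> transpose_mat Q * Q = 1\<^sub>m l \<and>
     A = Q * diag_of l lam * transpose_mat Q \<and>
     (\<forall>i j. i \<le> j \<and> j < l \<longrightarrow> lam j \<le> lam i) \<and>
     (\<forall>i<l. Q $$ (i,0) > 0)"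

text \<open>Index (0-based) of the eigenvector used in column j (1 \<le> j \<le> d):
the eigenvalues lam (l-d), ..., lam (l-1).\<close>

definition neg_idx :: "nat \<Rightarrow> nat \<Rightarrow> nat \<Rightarrow> nat" where
  "neg_idx l d j = l - d - 1 + j"

text \<open>Steps 2 and 3 of L-hydra, given the eigendecomposition (Q, lam) chosen in
Step 1. Returns None for Null.\<close>

definition lhydra :: "real mat \<Rightarrow> real mat \<Rightarrow> nat \<Rightarrow> real \<Rightarrow> real mat \<Rightarrow> (nat \<Rightarrow> real)
    \<Rightarrow> (real mat \<times> real mat) option" where
  "lhydra DL DN d \<kappa> Q lam =
    (let l = dim_row DL; AN = cosh_mat \<kappa> DN in
     if l < d + 1 \<or> \<not> (\<forall>k. l - d \<le> k \<and> k < l \<longrightarrow> lam k < 0) then None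
     else Some
      (mat l (d+1) (\<lambda>(i,j). if j = 0 then sqrt (lam 0) * Q $$ (i,0)
                            else sqrt (- lam (neg_idx l d j)) * Q $$ (i, neg_idx l d j)),
       AN * mat l (d+1) (\<lambda>(i,j). if j = 0 then Q $$ (i,0) / sqrt (lam 0)
                            else - Q $$ (i, neg_idx l d j) / sqrt (- lam (neg_idx l d j)))))"

end

theory Submission
  imports Defs
begin

text \<open>
  Write A = Q diag(lam) Q^T. The L-hydra embedding keeps the largest eigenvalue and the d most
  negative ones, so X_L J X_L^T is a truncated spectral sum and the residual A - X_L J X_L^T has
  squared Frobenius norm equal to the sum of lam k ^ 2 over the discarded indices k.
  Optimality is an indefinite Eckart--Young inequality. Given any X, pick for each discarded k with
  lam k \<noteq> 0 a unit test vector: if lam k > 0, in the span of the eigenvectors with eigenvalue at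
  least lam k and orthogonal to the first column of X; if lam k < 0, in the span of those with
  eigenvalue at most lam k and orthogonal to the other d columns. Dimension counting lets these
  be chosen orthonormal. Since J has signature (1, d), the quadratic form of A - X J X^T is at least
  lam k resp. at most lam k on them, and Bessel's inequality for the rank-one matrices
  z z^T bounds the Frobenius norm from below.
  Part (ii) is row-wise least squares against orthonormal columns of Q, and part (iii) follows from
  lam 0 \<ge> trace A / l = 1, positivity of the Perron vector and positivity of cosh.
\<close>

section \<open>Orthonormal families of real functions\<close>

lemma exists_nonzero_orthogonal_supported:
  fixes cs :: "('a \<Rightarrow> real) list" and S :: "'a set"
  shows "finite S \<Longrightarrow> length cs < card S \<Longrightarrow>
    \<exists>x. (\<forall>k. k \<notin> S \<longrightarrow> x k = 0) \<and> (\<exists>k\<in>S. x k \<noteq> 0) \<and>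
        (\<forall>c\<in>set cs. (\<Sum>k\<in>S. c k * x k) = 0)"
proof (induction "length cs" arbitrary: cs S)
  case 0
  then obtain s where "s \<in> S" by (metis card.empty ex_in_conv less_nat_zero_code)
  with 0 show ?case by (intro exI[of _ "\<lambda>k. if k = s then 1 else 0"]) auto
next
  case (Suc n)
  then obtain c cs0 where cs: "cs = c # cs0" and n: "n = length cs0"
    by (metis length_Suc_conv)
  show ?case
  proof (cases "\<forall>s\<in>S. c s = 0")
    case True
    from Suc.hyps(1)[OF n Suc.prems(1)] Suc.prems(2) cs obtain x where
      "\<forall>k. k \<notin> S \<longrightarrow> x k = 0" "\<exists>k\<in>S. x k \<noteq> 0" "\<forall>c\<in>set cs0. (\<Sum>k\<in>S. c k * x k) = 0"
      by auto
    with True cs show ?thesis by (intro exI[of _ x]) auto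
  next
    case False
    then obtain s where s: "s \<in> S" "c s \<noteq> 0" by auto
    define S' where "S' = S - {s}"
    \<comment> \<open>Eliminate the coordinate s from the remaining constraints, solve on S', then fix x s.\<close>
    define cs' where "cs' = map (\<lambda>c'. \<lambda>k. c' k - c' s / c s * c k) cs0"
    have "finite S'" "length cs' < card S'" "n = length cs'"
      using Suc.prems s cs n by (auto simp: S'_def cs'_def)
    from Suc.hyps(1)[OF this(3,1,2)] obtain y where
      y: "\<forall>k. k \<notin> S' \<longrightarrow> y k = 0" "\<exists>k\<in>S'. y k \<noteq> 0"
         "\<forall>c\<in>set cs'. (\<Sum>k\<in>S'. c k * y k) = 0"
      by blast
    define x where "x = y(s := - (\<Sum>k\<in>S'. c k * y k) / c s)"
    have split: "(\<Sum>k\<in>S. f k * x k) = f s * x s + (\<Sum>k\<in>S'. f k * y k)" for f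
    proof -
      have "S = insert s S'" "s \<notin> S'" "finite S'" using s Suc.prems(1) by (auto simp: S'_def)
      then show ?thesis by (simp add: x_def) (rule sum.cong; auto)
    qed
    have "(\<Sum>k\<in>S. c' k * x k) = 0" if "c' \<in> set cs0" for c'
    proof -
      have "(\<Sum>k\<in>S'. (c' k - c' s / c s * c k) * y k) = 0"
        using y(3) that by (auto simp: cs'_def)
      then have "(\<Sum>k\<in>S'. c' k * y k) = c' s / c s * (\<Sum>k\<in>S'. c k * y k)"
        by (simp add: algebra_simps sum_subtractf sum_distrib_left)
      then show ?thesis using split[of c'] s by (simp add: x_def field_simps)
    qed
    moreover have "(\<Sum>k\<in>S. c k * x k) = 0" using split[of c] s by (simp add: x_def)
    ultimately show ?thesis
      using y s cs by (intro exI[of _ x]) (auto simp: x_def S'_def)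
  qed
qed

lemma exists_unit_orthogonal_supported:
  fixes cs :: "('a \<Rightarrow> real) list"
  assumes U: "finite U" and SU: "S \<subseteq> U" and card: "length cs < card S"
  shows "\<exists>x. (\<forall>k. k \<notin> S \<longrightarrow> x k = 0) \<and> (\<Sum>k\<in>U. (x k)\<^sup>2) = 1 \<and>
             (\<forall>c\<in>set cs. (\<Sum>k\<in>U. c k * x k) = 0)"
proof -
  have S: "finite S" using U SU finite_subset by blast
  obtain y where y: "\<forall>k. k \<notin> S \<longrightarrow> y k = 0" "\<exists>k\<in>S. y k \<noteq> 0"
      "\<forall>c\<in>set cs. (\<Sum>k\<in>S. c k * y k) = 0"
    using exists_nonzero_orthogonal_supported[OF S card] by blast
  have on_U: "(\<Sum>k\<in>U. f k * y k) = (\<Sum>k\<in>S. f k * y k)" for f :: "'a \<Rightarrow> real"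
    by (rule sum.mono_neutral_right) (use U SU y(1) in auto)
  define n where "n = (\<Sum>k\<in>U. (y k)\<^sup>2)"
  have "n > 0"
  proof -
    obtain k where k: "k \<in> S" "y k \<noteq> 0" using y(2) by blast
    have "(y k)\<^sup>2 \<le> n" unfolding n_def by (rule member_le_sum) (use k SU U in auto)
    with k show ?thesis by (smt (verit) zero_less_power2)
  qed
  show ?thesis
  proof (intro exI[of _ "\<lambda>k. y k / sqrt n"] conjI ballI allI impI)
    show "(\<Sum>k\<in>U. (y k / sqrt n)\<^sup>2) = 1"
      using \<open>n > 0\<close> by (simp add: power_divide sum_divide_distrib[symmetric] n_def[symmetric])
    show "(\<Sum>k\<in>U. c k * (y k / sqrt n)) = 0" if "c \<in> set cs" for c
      using on_U[of c] y(3) that by (simp add: sum_divide_distrib[symmetric])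
  qed (use y(1) in auto)
qed

lemma exists_orthonormal_family_supported:
  fixes S :: "'i \<Rightarrow> 'a set" and cs :: "('a \<Rightarrow> real) list" and r :: "'i \<Rightarrow> nat"
  assumes U: "finite U"
  shows "finite I \<Longrightarrow> inj_on r I \<Longrightarrow>
    (\<forall>i\<in>I. S i \<subseteq> U \<and> length cs + card {j\<in>I. r j < r i} < card (S i)) \<Longrightarrow>
    \<exists>w. \<forall>i\<in>I. (\<forall>k. k \<notin> S i \<longrightarrow> w i k = 0) \<and> (\<Sum>k\<in>U. (w i k)\<^sup>2) = 1 \<and>
        (\<forall>c\<in>set cs. (\<Sum>k\<in>U. c k * w i k) = 0) \<and>
        (\<forall>j\<in>I. j \<noteq> i \<longrightarrow> (\<Sum>k\<in>U. w i k * w j k) = 0)"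
proof (induction "card I" arbitrary: I)
  case 0
  then show ?case by simp
next
  case (Suc n)
  \<comment> \<open>The member of highest rank is constructed last, orthogonal to all the others.\<close>
  then have "r ` I \<noteq> {}" "finite (r ` I)" by auto
  then obtain i0 where i0: "i0 \<in> I" "r i0 = Max (r ` I)" by (metis Max_in imageE)
  define I' where "I' = I - {i0}"
  have I': "n = card I'" "finite I'" "inj_on r I'"
    using Suc.hyps(2) Suc.prems(1,2) i0 by (auto simp: I'_def intro: inj_on_subset)
  have "r j < r i0" if "j \<in> I'" for j
  proof -
    have "j \<in> I" "j \<noteq> i0" using that by (auto simp: I'_def)
    then have "r j \<noteq> r i0" using Suc.prems(2) i0(1) by (auto dest: inj_onD)
    moreover have "r j \<le> r i0" using i0(2) \<open>j \<in> I\<close> Suc.prems(1) by simp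
    ultimately show ?thesis by simp
  qed
  then have earlier: "{j\<in>I. r j < r i0} = I'" by (auto simp: I'_def)
  have "\<forall>i\<in>I'. S i \<subseteq> U \<and> length cs + card {j\<in>I'. r j < r i} < card (S i)"
  proof
    fix i assume i: "i \<in> I'"
    have "card {j\<in>I'. r j < r i} \<le> card {j\<in>I. r j < r i}"
      by (rule card_mono) (use Suc.prems(1) in \<open>auto simp: I'_def\<close>)
    moreover have "i \<in> I" using i by (simp add: I'_def)
    ultimately show "S i \<subseteq> U \<and> length cs + card {j\<in>I'. r j < r i} < card (S i)"
      using Suc.prems(3) by fastforce
  qed
  from Suc.hyps(1)[OF I' this] obtain w' where
    w': "\<forall>i\<in>I'. (\<forall>k. k \<notin> S i \<longrightarrow> w' i k = 0) \<and> (\<Sum>k\<in>U. (w' i k)\<^sup>2) = 1 \<and>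
        (\<forall>c\<in>set cs. (\<Sum>k\<in>U. c k * w' i k) = 0) \<and>
        (\<forall>j\<in>I'. j \<noteq> i \<longrightarrow> (\<Sum>k\<in>U. w' i k * w' j k) = 0)" by blast
  obtain ws where ws: "set ws = w' ` I'" "distinct ws" using finite_distinct_list[OF finite_imageI[OF I'(2), of w']] by blast
  have "length ws \<le> card I'"
    using distinct_card[OF ws(2)] card_image_le[OF I'(2), of w'] by (simp add: ws(1))
  moreover have "S i0 \<subseteq> U" "length cs + card I' < card (S i0)"
    using Suc.prems(3) i0(1) earlier by auto
  ultimately obtain x where x: "\<forall>k. k \<notin> S i0 \<longrightarrow> x k = 0" "(\<Sum>k\<in>U. (x k)\<^sup>2) = 1"
      "\<forall>c\<in>set (cs @ ws). (\<Sum>k\<in>U. c k * x k) = 0"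
    using exists_unit_orthogonal_supported[OF U, of "S i0" "cs @ ws"] by auto
  have orth: "(\<Sum>k\<in>U. w' j k * x k) = 0" "(\<Sum>k\<in>U. x k * w' j k) = 0" if "j \<in> I'" for j
    using x(3) ws that by (auto simp: mult.commute)
  show ?case
  proof (rule exI[of _ "w'(i0 := x)"], intro ballI)
    fix i assume "i \<in> I"
    then consider "i = i0" | "i \<in> I'" by (auto simp: I'_def)
    then show "(\<forall>k. k \<notin> S i \<longrightarrow> (w'(i0 := x)) i k = 0) \<and> (\<Sum>k\<in>U. ((w'(i0 := x)) i k)\<^sup>2) = 1 \<and>
        (\<forall>c\<in>set cs. (\<Sum>k\<in>U. c k * (w'(i0 := x)) i k) = 0) \<and>
        (\<forall>j\<in>I. j \<noteq> i \<longrightarrow> (\<Sum>k\<in>U. (w'(i0 := x)) i k * (w'(i0 := x)) j k) = 0)"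
    proof cases
      case 1
      then show ?thesis using x orth by (auto simp: I'_def)
    next
      case 2
      then have "i \<noteq> i0" by (simp add: I'_def)
      with 2 show ?thesis using w' orth by (auto simp: I'_def)
    qed
  qed
qed

lemma sum_sq_orthonormal_combination:
  fixes f :: "'j \<Rightarrow> 'a \<Rightarrow> real" and \<beta> :: "'j \<Rightarrow> real"
  assumes J: "finite J"
    and on: "\<forall>j\<in>J. \<forall>j'\<in>J. (\<Sum>t\<in>U. f j t * f j' t) = (if j = j' then 1 else 0)"
  shows "(\<Sum>t\<in>U. (\<Sum>j\<in>J. \<beta> j * f j t)\<^sup>2) = (\<Sum>j\<in>J. (\<beta> j)\<^sup>2)"
proof -
  have "(\<Sum>t\<in>U. (\<Sum>j\<in>J. \<beta> j * f j t)\<^sup>2)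
      = (\<Sum>t\<in>U. \<Sum>j\<in>J. \<Sum>j'\<in>J. \<beta> j * \<beta> j' * (f j t * f j' t))"
    unfolding power2_eq_square sum_product by (simp add: algebra_simps)
  also have "\<dots> = (\<Sum>j\<in>J. \<Sum>t\<in>U. \<Sum>j'\<in>J. \<beta> j * \<beta> j' * (f j t * f j' t))"
    by (rule sum.swap)
  also have "\<dots> = (\<Sum>j\<in>J. \<Sum>j'\<in>J. \<beta> j * \<beta> j' * (\<Sum>t\<in>U. f j t * f j' t))"
    by (simp add: sum.swap[of _ U] sum_distrib_left)
  also have "\<dots> = (\<Sum>j\<in>J. \<Sum>j'\<in>J. if j = j' then \<beta> j * \<beta> j else 0)"
    by (intro sum.cong refl) (use on in auto)
  finally show ?thesis using J by (simp add: power2_eq_square)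
qed

lemma sum_sq_spectral_sum:
  fixes q :: "'a \<Rightarrow> 'k \<Rightarrow> real" and \<mu> :: "'k \<Rightarrow> real"
  assumes R: "finite R"
    and on: "\<forall>k\<in>R. \<forall>k'\<in>R. (\<Sum>a\<in>U. q a k * q a k') = (if k = k' then 1 else 0)"
  shows "(\<Sum>a\<in>U. \<Sum>b\<in>U. (\<Sum>k\<in>R. \<mu> k * q a k * q b k)\<^sup>2) = (\<Sum>k\<in>R. (\<mu> k)\<^sup>2)"
proof -
  have "(\<Sum>b\<in>U. (\<Sum>k\<in>R. \<mu> k * q a k * q b k)\<^sup>2) = (\<Sum>k\<in>R. (\<mu> k)\<^sup>2 * (q a k * q a k))" for a
    using sum_sq_orthonormal_combination[OF R, where U=U and f="\<lambda>k b. q b k" and \<beta>="\<lambda>k. \<mu> k * q a k"] on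
    by (simp add: power2_eq_square mult_ac)
  then have "(\<Sum>a\<in>U. \<Sum>b\<in>U. (\<Sum>k\<in>R. \<mu> k * q a k * q b k)\<^sup>2)
      = (\<Sum>k\<in>R. (\<mu> k)\<^sup>2 * (\<Sum>a\<in>U. q a k * q a k))"
    by (simp add: sum.swap[of _ U] sum_distrib_left)
  also have "\<dots> = (\<Sum>k\<in>R. (\<mu> k)\<^sup>2)" by (intro sum.cong refl) (use on in auto)
  finally show ?thesis .
qed

lemma sum_quadratic_forms_sq_le_sum_sq:
  fixes C :: "'a \<Rightarrow> 'a \<Rightarrow> real" and z :: "'b \<Rightarrow> 'a \<Rightarrow> real"
  assumes A: "finite A"
    and on: "\<forall>a\<in>A. \<forall>b\<in>A. (\<Sum>k\<in>U. z a k * z b k) = (if a = b then 1 else 0)"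
  shows "(\<Sum>a\<in>A. (\<Sum>i\<in>U. \<Sum>j\<in>U. C i j * z a i * z a j)\<^sup>2) \<le> (\<Sum>i\<in>U. \<Sum>j\<in>U. (C i j)\<^sup>2)"
proof -
  define g where "g a = (\<Sum>i\<in>U. \<Sum>j\<in>U. C i j * z a i * z a j)" for a
  \<comment> \<open>P is the orthogonal projection of C onto the span of the rank-one matrices z a (z a)^T.\<close>
  define P where "P i j = (\<Sum>a\<in>A. g a * z a i * z a j)" for i j
  have CP: "(\<Sum>i\<in>U. \<Sum>j\<in>U. C i j * P i j) = (\<Sum>a\<in>A. (g a)\<^sup>2)"
  proof -
    have "(\<Sum>i\<in>U. \<Sum>j\<in>U. C i j * P i j) = (\<Sum>i\<in>U. \<Sum>j\<in>U. \<Sum>a\<in>A. g a * (C i j * z a i * z a j))"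
      unfolding P_def by (simp add: sum_distrib_left mult_ac)
    also have "\<dots> = (\<Sum>a\<in>A. \<Sum>i\<in>U. \<Sum>j\<in>U. g a * (C i j * z a i * z a j))"
      by (simp add: sum.swap[of _ A])
    finally show ?thesis by (simp add: g_def[symmetric] sum_distrib_left[symmetric] power2_eq_square)
  qed
  have PP: "(\<Sum>i\<in>U. \<Sum>j\<in>U. (P i j)\<^sup>2) = (\<Sum>a\<in>A. (g a)\<^sup>2)"
    unfolding P_def by (rule sum_sq_spectral_sum[OF A]) (use on in auto)
  have "0 \<le> (\<Sum>i\<in>U. \<Sum>j\<in>U. (C i j - P i j)\<^sup>2)" by (intro sum_nonneg) auto
  also have "\<dots> = (\<Sum>i\<in>U. \<Sum>j\<in>U. (C i j)\<^sup>2) - 2 * (\<Sum>i\<in>U. \<Sum>j\<in>U. C i j * P i j)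
      + (\<Sum>i\<in>U. \<Sum>j\<in>U. (P i j)\<^sup>2)"
    by (simp add: power2_diff sum.distrib sum_subtractf sum_distrib_left mult.assoc)
  finally show ?thesis unfolding CP PP g_def by simp
qed

lemma orthonormal_projection_least_squares:
  fixes r :: "'a \<Rightarrow> real" and f :: "'j \<Rightarrow> 'a \<Rightarrow> real" and \<beta> :: "'j \<Rightarrow> real"
  assumes J: "finite J"
    and on: "\<forall>j\<in>J. \<forall>j'\<in>J. (\<Sum>t\<in>U. f j t * f j' t) = (if j = j' then 1 else 0)"
  shows "(\<Sum>t\<in>U. (r t - (\<Sum>j\<in>J. (\<Sum>t'\<in>U. r t' * f j t') * f j t))\<^sup>2)
       \<le> (\<Sum>t\<in>U. (r t - (\<Sum>j\<in>J. \<beta> j * f j t))\<^sup>2)"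
proof -
  define p where "p j = (\<Sum>t\<in>U. r t * f j t)" for j
  have expand: "(\<Sum>t\<in>U. (r t - (\<Sum>j\<in>J. \<gamma> j * f j t))\<^sup>2)
      = (\<Sum>t\<in>U. (r t)\<^sup>2) - 2 * (\<Sum>j\<in>J. \<gamma> j * p j) + (\<Sum>j\<in>J. (\<gamma> j)\<^sup>2)" for \<gamma>
  proof -
    have "(\<Sum>t\<in>U. r t * (\<Sum>j\<in>J. \<gamma> j * f j t)) = (\<Sum>j\<in>J. \<gamma> j * p j)"
      unfolding p_def by (simp add: sum_distrib_left sum.swap[of _ U] mult_ac)
    then show ?thesis
      using sum_sq_orthonormal_combination[OF J on, of \<gamma>]
      by (simp add: power2_diff sum.distrib sum_subtractf sum_distrib_left[symmetric] mult.assoc)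
  qed
  have "0 \<le> (\<Sum>j\<in>J. (\<beta> j - p j)\<^sup>2)" by (simp add: sum_nonneg)
  also have "\<dots> = (\<Sum>j\<in>J. (\<beta> j)\<^sup>2) + (\<Sum>j\<in>J. (p j)\<^sup>2) - 2 * (\<Sum>j\<in>J. \<beta> j * p j)"
    by (simp add: power2_diff sum.distrib sum_subtractf sum_distrib_left mult.assoc)
  finally show ?thesis
    unfolding p_def[symmetric] expand by (simp add: power2_eq_square)
qed

lemma sum_quadratic_form_spectral_sum:
  fixes \<alpha> :: "'t \<Rightarrow> real" and p :: "'t \<Rightarrow> 'a \<Rightarrow> real" and z :: "'a \<Rightarrow> real"
  shows "(\<Sum>i\<in>U. \<Sum>j\<in>U. (\<Sum>t\<in>T. \<alpha> t * p t i * p t j) * z i * z j)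
       = (\<Sum>t\<in>T. \<alpha> t * (\<Sum>i\<in>U. p t i * z i)\<^sup>2)"
  unfolding power2_eq_square
  by (simp add: sum_distrib_left sum_distrib_right sum.swap[of _ T] mult_ac)

lemma orthonormal_columns_coeff:
  fixes q :: "nat \<Rightarrow> nat \<Rightarrow> real"
  assumes orth: "\<And>k k'. k < l \<Longrightarrow> k' < l \<Longrightarrow> (\<Sum>i<l. q i k * q i k') = (if k = k' then 1 else 0)"
    and "k' < l"
  shows "(\<Sum>i<l. q i k' * (\<Sum>k<l. q i k * w k)) = w k'"
proof -
  have "(\<Sum>i<l. q i k' * (\<Sum>k<l. q i k * w k)) = (\<Sum>i<l. \<Sum>k<l. w k * (q i k * q i k'))"
    by (simp add: sum_distrib_left mult_ac)
  also have "\<dots> = (\<Sum>k<l. w k * (\<Sum>i<l. q i k * q i k'))"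
    by (subst sum.swap) (simp add: sum_distrib_left)
  also have "\<dots> = (\<Sum>k<l. if k = k' then w k' else 0)"
    by (rule sum.cong) (use orth \<open>k' < l\<close> in auto)
  finally show ?thesis using \<open>k' < l\<close> by simp
qed

lemma orthonormal_columns_inner:
  fixes q :: "nat \<Rightarrow> nat \<Rightarrow> real"
  assumes orth: "\<And>k k'. k < l \<Longrightarrow> k' < l \<Longrightarrow> (\<Sum>i<l. q i k * q i k') = (if k = k' then 1 else 0)"
  shows "(\<Sum>i<l. (\<Sum>k<l. q i k * v k) * (\<Sum>k<l. q i k * w k)) = (\<Sum>k<l. v k * w k)"
proof -
  define z where "z i = (\<Sum>k<l. q i k * w k)" for i
  have "(\<Sum>i<l. (\<Sum>k<l. q i k * v k) * z i) = (\<Sum>i<l. \<Sum>k<l. v k * (q i k * z i))"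
    by (simp add: sum_distrib_right mult.assoc mult.left_commute)
  also have "\<dots> = (\<Sum>k<l. v k * (\<Sum>i<l. q i k * z i))"
    by (subst sum.swap) (simp add: sum_distrib_left)
  also have "\<dots> = (\<Sum>k<l. v k * w k)"
    by (intro sum.cong refl) (simp add: z_def orthonormal_columns_coeff[OF orth])
  finally show ?thesis by (simp add: z_def)
qed

section \<open>An indefinite Eckart--Young inequality\<close>

lemma rayleigh_quotient_ge_if_supported_below:
  fixes lam w :: "nat \<Rightarrow> real"
  assumes sorted: "\<forall>i j. i \<le> j \<and> j < l \<longrightarrow> lam j \<le> lam i"
    and "a < l" and supp: "\<forall>k. a < k \<longrightarrow> w k = 0" and unit: "(\<Sum>k<l. (w k)\<^sup>2) = 1"
  shows "lam a \<le> (\<Sum>k<l. lam k * (w k)\<^sup>2)"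
proof -
  have "(\<Sum>k<l. lam a * (w k)\<^sup>2) \<le> (\<Sum>k<l. lam k * (w k)\<^sup>2)"
  proof (rule sum_mono)
    fix k assume "k \<in> {..<l}"
    show "lam a * (w k)\<^sup>2 \<le> lam k * (w k)\<^sup>2"
      using sorted supp \<open>a < l\<close> by (cases "k \<le> a") (auto intro: mult_right_mono)
  qed
  then show ?thesis by (simp add: sum_distrib_left[symmetric] unit)
qed

lemma rayleigh_quotient_le_if_supported_above:
  fixes lam w :: "nat \<Rightarrow> real"
  assumes sorted: "\<forall>i j. i \<le> j \<and> j < l \<longrightarrow> lam j \<le> lam i"
    and supp: "\<forall>k. k < a \<longrightarrow> w k = 0" and unit: "(\<Sum>k<l. (w k)\<^sup>2) = 1"
  shows "(\<Sum>k<l. lam k * (w k)\<^sup>2) \<le> lam a"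
proof -
  have "(\<Sum>k<l. lam k * (w k)\<^sup>2) \<le> (\<Sum>k<l. lam a * (w k)\<^sup>2)"
  proof (rule sum_mono)
    fix k assume "k \<in> {..<l}"
    then show "lam k * (w k)\<^sup>2 \<le> lam a * (w k)\<^sup>2"
      using sorted supp by (cases "a \<le> k") (auto intro: mult_right_mono)
  qed
  then show ?thesis by (simp add: sum_distrib_left[symmetric] unit)
qed

definition lorentz_sign :: "nat \<Rightarrow> real" where
  "lorentz_sign j = (if j = 0 then 1 else -1)"

lemma sum_lorentz_sign:
  "(\<Sum>j<d+1. lorentz_sign j * f j) = f 0 - (\<Sum>j<d. f (Suc j))"
  by (simp only: Suc_eq_plus1[symmetric] sum.lessThan_Suc_shift) (simp add: lorentz_sign_def sum_negf)

lemma exists_orthonormal_family_supported_atMost: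
  fixes cs :: "(nat \<Rightarrow> real) list"
  assumes "I \<subseteq> {length cs..<l}"
  shows "\<exists>w. \<forall>a\<in>I. (\<forall>k. k \<notin> {..a} \<longrightarrow> w a k = 0) \<and> (\<Sum>k<l. (w a k)\<^sup>2) = 1 \<and>
    (\<forall>c\<in>set cs. (\<Sum>k<l. c k * w a k) = 0) \<and> (\<forall>b\<in>I. b \<noteq> a \<longrightarrow> (\<Sum>k<l. w a k * w b k) = 0)"
proof (rule exists_orthonormal_family_supported)
  show "\<forall>a\<in>I. {..a} \<subseteq> {..<l} \<and> length cs + card {b\<in>I. id b < id a} < card {..a}"
  proof
    fix a assume a: "a \<in> I"
    have "card {b\<in>I. id b < id a} \<le> card {length cs..<a}"
      by (rule card_mono) (use assms in auto)
    moreover have "length cs \<le> a" "a < l" using a assms by auto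
    ultimately show "{..a} \<subseteq> {..<l} \<and> length cs + card {b\<in>I. id b < id a} < card {..a}"
      by auto
  qed
qed (use assms finite_subset in auto)

lemma exists_orthonormal_family_supported_atLeast:
  fixes cs :: "(nat \<Rightarrow> real) list"
  assumes "I \<subseteq> {..<l - length cs}"
  shows "\<exists>w. \<forall>a\<in>I. (\<forall>k. k \<notin> {a..<l} \<longrightarrow> w a k = 0) \<and> (\<Sum>k<l. (w a k)\<^sup>2) = 1 \<and>
    (\<forall>c\<in>set cs. (\<Sum>k<l. c k * w a k) = 0) \<and> (\<forall>b\<in>I. b \<noteq> a \<longrightarrow> (\<Sum>k<l. w a k * w b k) = 0)"
proof (rule exists_orthonormal_family_supported)
  show "inj_on (\<lambda>k. l - k) I" by (rule inj_onI) (use assms in auto)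
  show "\<forall>a\<in>I. {a..<l} \<subseteq> {..<l} \<and> length cs + card {b\<in>I. l - b < l - a} < card {a..<l}"
  proof
    fix a assume a: "a \<in> I"
    have "card {b\<in>I. l - b < l - a} \<le> card {Suc a..<l - length cs}"
      by (rule card_mono) (use assms in auto)
    then show "{a..<l} \<subseteq> {..<l} \<and> length cs + card {b\<in>I. l - b < l - a} < card {a..<l}"
      using a assms by auto
  qed
qed (use assms finite_subset in auto)

lemma sq_eigenvalue_le_sq_lorentz_rayleigh:
  fixes lam w :: "nat \<Rightarrow> real" and c :: "nat \<Rightarrow> nat \<Rightarrow> real"
  assumes sorted: "\<forall>i j. i \<le> j \<and> j < l \<longrightarrow> lam j \<le> lam i"
    and "a < l" and unit: "(\<Sum>k<l. (w k)\<^sup>2) = 1"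
    and pos: "0 < lam a \<Longrightarrow> (\<forall>k. a < k \<longrightarrow> w k = 0) \<and> (\<Sum>k<l. w k * c 0 k) = 0"
    and neg: "lam a < 0 \<Longrightarrow> (\<forall>k. k < a \<longrightarrow> w k = 0) \<and> (\<forall>j<d. (\<Sum>k<l. w k * c (Suc j) k) = 0)"
  shows "(lam a)\<^sup>2 \<le> ((\<Sum>k<l. lam k * (w k)\<^sup>2) - (\<Sum>t<d+1. lorentz_sign t * (\<Sum>k<l. w k * c t k)\<^sup>2))\<^sup>2"
proof (cases "0 < lam a")
  \<comment> \<open>The Lorentz form is negative semidefinite on the complement of c 0 ...\<close>
  case True
  have "lam a \<le> (\<Sum>k<l. lam k * (w k)\<^sup>2)"
    using rayleigh_quotient_ge_if_supported_below[OF sorted \<open>a < l\<close> _ unit] pos True by blast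
  moreover have "(\<Sum>t<d+1. lorentz_sign t * (\<Sum>k<l. w k * c t k)\<^sup>2) \<le> 0"
    unfolding sum_lorentz_sign using pos True by (simp add: sum_nonneg)
  ultimately show ?thesis using True by (intro power_mono) auto
next
  \<comment> \<open>... and positive semidefinite on the complement of the c (Suc j).\<close>
  case False
  show ?thesis
  proof (cases "lam a = 0")
    case False
    with \<open>\<not> 0 < lam a\<close> have "lam a < 0" by simp
    have "(\<Sum>k<l. lam k * (w k)\<^sup>2) \<le> lam a"
      using rayleigh_quotient_le_if_supported_above[OF sorted _ unit] neg \<open>lam a < 0\<close> by blast
    moreover have "0 \<le> (\<Sum>t<d+1. lorentz_sign t * (\<Sum>k<l. w k * c t k)\<^sup>2)"
      unfolding sum_lorentz_sign using neg \<open>lam a < 0\<close> by simp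
    ultimately have "\<bar>lam a\<bar> \<le> \<bar>(\<Sum>k<l. lam k * (w k)\<^sup>2) - (\<Sum>t<d+1. lorentz_sign t * (\<Sum>k<l. w k * c t k)\<^sup>2)\<bar>"
      using \<open>lam a < 0\<close> by linarith
    then show ?thesis by (simp add: abs_le_square_iff)
  qed simp
qed

text \<open>In the application, c t is column t of X expressed in the eigenbasis.\<close>

lemma exists_lorentz_test_vectors:
  fixes l d :: nat and lam :: "nat \<Rightarrow> real" and c :: "nat \<Rightarrow> nat \<Rightarrow> real"
  assumes sorted: "\<forall>i j. i \<le> j \<and> j < l \<longrightarrow> lam j \<le> lam i"
  defines "I \<equiv> {k\<in>{1..<l-d}. lam k \<noteq> 0}"
  shows "\<exists>w. (\<forall>a\<in>I. \<forall>b\<in>I. (\<Sum>k<l. w a k * w b k) = (if a = b then 1 else 0)) \<and>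
    (\<forall>a\<in>I. 0 < lam a \<longrightarrow> (\<forall>k. a < k \<longrightarrow> w a k = 0) \<and> (\<Sum>k<l. c 0 k * w a k) = 0) \<and>
    (\<forall>a\<in>I. lam a < 0 \<longrightarrow> (\<forall>k. k < a \<longrightarrow> w a k = 0) \<and> (\<forall>j<d. (\<Sum>k<l. c (Suc j) k * w a k) = 0))"
proof -
  define Ip where "Ip = {k\<in>I. 0 < lam k}"
  define In where "In = {k\<in>I. lam k < 0}"
  have "Ip \<subseteq> {length [c 0]..<l}" by (auto simp: Ip_def I_def)
  from exists_orthonormal_family_supported_atMost[OF this] obtain wp where
    wp: "\<forall>a\<in>Ip. (\<forall>k. k \<notin> {..a} \<longrightarrow> wp a k = 0) \<and> (\<Sum>k<l. (wp a k)\<^sup>2) = 1 \<and>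
      (\<Sum>k<l. c 0 k * wp a k) = 0 \<and> (\<forall>b\<in>Ip. b \<noteq> a \<longrightarrow> (\<Sum>k<l. wp a k * wp b k) = 0)"
    by auto
  have "In \<subseteq> {..<l - length (map (\<lambda>j. c (Suc j)) [0..<d])}" by (auto simp: In_def I_def)
  from exists_orthonormal_family_supported_atLeast[OF this] obtain wn where
    wn: "\<forall>a\<in>In. (\<forall>k. k \<notin> {a..<l} \<longrightarrow> wn a k = 0) \<and> (\<Sum>k<l. (wn a k)\<^sup>2) = 1 \<and>
      (\<forall>j<d. (\<Sum>k<l. c (Suc j) k * wn a k) = 0) \<and> (\<forall>b\<in>In. b \<noteq> a \<longrightarrow> (\<Sum>k<l. wn a k * wn b k) = 0)"
    by (simp add: atLeast0LessThan) (simp add: Ball_def, blast)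
  \<comment> \<open>Sortedness puts every positive index before every negative one, so the supports are disjoint.\<close>
  have cross: "(\<Sum>k<l. wp a k * wn b k) = 0" if "a \<in> Ip" "b \<in> In" for a b
  proof -
    have "a < b" using that sorted by (force simp: Ip_def In_def I_def not_less)
    then have "wp a k * wn b k = 0" for k using that wp wn by (cases "k \<le> a") auto
    then show ?thesis by (simp del: mult_eq_0_iff)
  qed
  define w where "w a = (if 0 < lam a then wp a else wn a)" for a
  show ?thesis
  proof (intro exI[of _ w] conjI ballI impI)
    fix a b assume ab: "a \<in> I" "b \<in> I"
    then consider "a \<in> Ip" "b \<in> Ip" | "a \<in> Ip" "b \<in> In" | "a \<in> In" "b \<in> Ip" | "a \<in> In" "b \<in> In"
      by (auto simp: Ip_def In_def I_def neq_iff)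
    then show "(\<Sum>k<l. w a k * w b k) = (if a = b then 1 else 0)"
    proof cases
      case 1 then show ?thesis using wp by (auto simp: w_def Ip_def power2_eq_square)
    next
      case 2 then show ?thesis using cross by (auto simp: w_def Ip_def In_def)
    next
      case 3 then show ?thesis using cross[of b a] by (auto simp: w_def Ip_def In_def mult.commute)
    next
      case 4 then show ?thesis using wn by (auto simp: w_def In_def power2_eq_square)
    qed
  qed (use wp wn in \<open>auto simp: w_def Ip_def In_def\<close>)
qed

lemma lorentz_residual_quadratic_form:
  fixes q x :: "nat \<Rightarrow> nat \<Rightarrow> real" and lam w :: "nat \<Rightarrow> real"
  assumes orth: "\<And>k k'. k < l \<Longrightarrow> k' < l \<Longrightarrow> (\<Sum>i<l. q i k * q i k') = (if k = k' then 1 else 0)"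
  defines "z i \<equiv> \<Sum>k<l. q i k * w k"
  shows "(\<Sum>i<l. \<Sum>j<l. ((\<Sum>k<l. lam k * q i k * q j k) - (\<Sum>t<d+1. lorentz_sign t * x i t * x j t))
            * z i * z j)
       = (\<Sum>k<l. lam k * (w k)\<^sup>2)
         - (\<Sum>t<d+1. lorentz_sign t * (\<Sum>k<l. w k * (\<Sum>i<l. q i k * x i t))\<^sup>2)"
proof -
  have x_coord: "(\<Sum>i<l. x i t * z i) = (\<Sum>k<l. w k * (\<Sum>i<l. q i k * x i t))" for t
  proof -
    have "(\<Sum>i<l. x i t * z i) = (\<Sum>i<l. \<Sum>k<l. w k * (q i k * x i t))"
      by (simp add: z_def sum_distrib_left mult_ac)
    also have "\<dots> = (\<Sum>k<l. w k * (\<Sum>i<l. q i k * x i t))"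
      by (subst sum.swap) (simp add: sum_distrib_left)
    finally show ?thesis .
  qed
  have "(\<Sum>i<l. \<Sum>j<l. ((\<Sum>k<l. lam k * q i k * q j k) - (\<Sum>t<d+1. lorentz_sign t * x i t * x j t))
            * z i * z j)
      = (\<Sum>i<l. \<Sum>j<l. (\<Sum>k<l. lam k * q i k * q j k) * z i * z j)
        - (\<Sum>i<l. \<Sum>j<l. (\<Sum>t<d+1. lorentz_sign t * x i t * x j t) * z i * z j)"
    by (simp add: left_diff_distrib sum_subtractf)
  also have "\<dots> = (\<Sum>k<l. lam k * (\<Sum>i<l. q i k * z i)\<^sup>2)
        - (\<Sum>t<d+1. lorentz_sign t * (\<Sum>i<l. x i t * z i)\<^sup>2)"
    using sum_quadratic_form_spectral_sum[where \<alpha>=lam and p="\<lambda>k i. q i k" and z=z and U="{..<l}" and T="{..<l}"]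
      sum_quadratic_form_spectral_sum[where \<alpha>=lorentz_sign and p="\<lambda>t i. x i t" and z=z and U="{..<l}" and T="{..<d+1}"]
    by simp
  also have "(\<Sum>k<l. lam k * (\<Sum>i<l. q i k * z i)\<^sup>2) = (\<Sum>k<l. lam k * (w k)\<^sup>2)"
    by (rule sum.cong) (simp_all add: z_def orthonormal_columns_coeff[OF orth])
  finally show ?thesis by (simp only: x_coord)
qed

lemma lorentz_gram_frobenius_lower_bound:
  fixes q x :: "nat \<Rightarrow> nat \<Rightarrow> real" and lam :: "nat \<Rightarrow> real"
  assumes orth: "\<And>k k'. k < l \<Longrightarrow> k' < l \<Longrightarrow> (\<Sum>i<l. q i k * q i k') = (if k = k' then 1 else 0)"
    and sorted: "\<forall>i j. i \<le> j \<and> j < l \<longrightarrow> lam j \<le> lam i"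
  shows "(\<Sum>k\<in>{1..<l-d}. (lam k)\<^sup>2) \<le>
    (\<Sum>a<l. \<Sum>b<l. ((\<Sum>k<l. lam k * q a k * q b k) - (\<Sum>j<d+1. lorentz_sign j * x a j * x b j))\<^sup>2)"
proof -
  define I where "I = {k\<in>{1..<l-d}. lam k \<noteq> 0}"
  define c where "c t k = (\<Sum>i<l. q i k * x i t)" for t k
  obtain w where
    on: "\<forall>a\<in>I. \<forall>b\<in>I. (\<Sum>k<l. w a k * w b k) = (if a = b then 1 else 0)" and
    pos: "\<forall>a\<in>I. 0 < lam a \<longrightarrow> (\<forall>k. a < k \<longrightarrow> w a k = 0) \<and> (\<Sum>k<l. c 0 k * w a k) = 0" and
    neg: "\<forall>a\<in>I. lam a < 0 \<longrightarrow> (\<forall>k. k < a \<longrightarrow> w a k = 0) \<and> (\<forall>j<d. (\<Sum>k<l. c (Suc j) k * w a k) = 0)"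
    using exists_lorentz_test_vectors[OF sorted, of d c] unfolding I_def by blast
  define z where "z a i = (\<Sum>k<l. q i k * w a k)" for a i
  define C where "C a b = (\<Sum>k<l. lam k * q a k * q b k) - (\<Sum>j<d+1. lorentz_sign j * x a j * x b j)"
    for a b
  have quad: "(\<Sum>i<l. \<Sum>j<l. C i j * z a i * z a j)
      = (\<Sum>k<l. lam k * (w a k)\<^sup>2) - (\<Sum>t<d+1. lorentz_sign t * (\<Sum>k<l. w a k * c t k)\<^sup>2)" for a
    unfolding C_def z_def c_def by (rule lorentz_residual_quadratic_form[OF orth])
  have unit: "(\<Sum>k<l. (w a k)\<^sup>2) = 1" if "a \<in> I" for a
    using on that by (simp add: power2_eq_square)
  have "(lam a)\<^sup>2 \<le> (\<Sum>i<l. \<Sum>j<l. C i j * z a i * z a j)\<^sup>2" if a: "a \<in> I" for a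
    unfolding quad
    by (rule sq_eigenvalue_le_sq_lorentz_rayleigh[OF sorted _ unit[OF a]]) (use a pos neg in \<open>auto simp: I_def mult.commute\<close>)
  then have "(\<Sum>a\<in>I. (lam a)\<^sup>2) \<le> (\<Sum>a\<in>I. (\<Sum>i<l. \<Sum>j<l. C i j * z a i * z a j)\<^sup>2)"
    by (rule sum_mono)
  also have "\<dots> \<le> (\<Sum>i<l. \<Sum>j<l. (C i j)\<^sup>2)"
  proof (rule sum_quadratic_forms_sq_le_sum_sq)
    show "finite I" by (simp add: I_def)
    show "\<forall>a\<in>I. \<forall>b\<in>I. (\<Sum>k<l. z a k * z b k) = (if a = b then 1 else 0)"
      using on by (simp add: z_def orthonormal_columns_inner[OF orth])
  qed
  also have "(\<Sum>a\<in>I. (lam a)\<^sup>2) = (\<Sum>k\<in>{1..<l-d}. (lam k)\<^sup>2)"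
    by (rule sum.mono_neutral_left) (auto simp: I_def)
  finally show ?thesis by (simp add: C_def)
qed

section \<open>The L-hydra embedding\<close>

lemma index_mult_mat_sum:
  fixes A B :: "real mat"
  assumes "A \<in> carrier_mat n k" "B \<in> carrier_mat k p" "i < n" "j < p"
  shows "(A * B) $$ (i,j) = (\<Sum>t<k. A $$ (i,t) * B $$ (t,j))"
  using assms by (simp add: scalar_prod_def atLeast0LessThan)

lemma index_lorentz_form:
  fixes X Y :: "real mat"
  assumes X: "X \<in> carrier_mat n (d+1)" and Y: "Y \<in> carrier_mat p (d+1)" and "a < n" "b < p"
  shows "(X * lorentz_J d * transpose_mat Y) $$ (a,b) = (\<Sum>j<d+1. lorentz_sign j * X $$ (a,j) * Y $$ (b,j))"
proof -
  have J: "lorentz_J d \<in> carrier_mat (d+1) (d+1)" by (simp add: lorentz_J_def)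
  have XJ: "(X * lorentz_J d) $$ (a,j) = lorentz_sign j * X $$ (a,j)" if "j < d+1" for j
  proof -
    have "(X * lorentz_J d) $$ (a,j) = (\<Sum>t<d+1. X $$ (a,t) * lorentz_J d $$ (t,j))"
      by (rule index_mult_mat_sum[OF X J \<open>a < n\<close> that])
    also have "\<dots> = (\<Sum>t<d+1. if t = j then X $$ (a,j) * lorentz_sign j else 0)"
      by (rule sum.cong) (use that in \<open>auto simp: lorentz_J_def lorentz_sign_def\<close>)
    finally show ?thesis using that by simp
  qed
  have "(X * lorentz_J d * transpose_mat Y) $$ (a,b)
      = (\<Sum>j<d+1. (X * lorentz_J d) $$ (a,j) * transpose_mat Y $$ (j,b))"
    by (rule index_mult_mat_sum) (use X Y J \<open>a < n\<close> \<open>b < p\<close> in auto)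
  also have "\<dots> = (\<Sum>j<d+1. lorentz_sign j * X $$ (a,j) * Y $$ (b,j))"
    by (rule sum.cong) (use Y \<open>b < p\<close> XJ in auto)
  finally show ?thesis .
qed

lemma frob_norm_minus_lorentz_form:
  fixes A X Y :: "real mat"
  assumes A: "A \<in> carrier_mat n p" and X: "X \<in> carrier_mat n (d+1)" and Y: "Y \<in> carrier_mat p (d+1)"
  shows "frob_norm (A - X * lorentz_J d * transpose_mat Y)
       = sqrt (\<Sum>a<n. \<Sum>b<p. (A $$ (a,b) - (\<Sum>j<d+1. lorentz_sign j * X $$ (a,j) * Y $$ (b,j)))\<^sup>2)"
proof -
  have entry: "(A - X * lorentz_J d * transpose_mat Y) $$ (a,b)
      = A $$ (a,b) - (\<Sum>j<d+1. lorentz_sign j * X $$ (a,j) * Y $$ (b,j))" if "a < n" "b < p" for a b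
  proof -
    have "(A - X * lorentz_J d * transpose_mat Y) $$ (a,b) = A $$ (a,b) - (X * lorentz_J d * transpose_mat Y) $$ (a,b)"
      using A X Y that by (simp add: lorentz_J_def)
    then show ?thesis by (simp only: index_lorentz_form[OF X Y that])
  qed
  have "dim_row (A - X * lorentz_J d * transpose_mat Y) = n"
    "dim_col (A - X * lorentz_J d * transpose_mat Y) = p"
    using A X Y by auto
  then show ?thesis
    unfolding frob_norm_def
    by (simp only:) (intro arg_cong[where f=sqrt] sum.cong refl, simp only: entry lessThan_iff)
qed

lemma orthonormal_columns_if_transpose_mult:
  fixes Q :: "real mat"
  assumes Q: "Q \<in> carrier_mat l l" and QQ: "transpose_mat Q * Q = 1\<^sub>m l" and "k < l" "k' < l"
  shows "(\<Sum>i<l. Q $$ (i,k) * Q $$ (i,k')) = (if k = k' then 1 else 0)"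
proof -
  have "(transpose_mat Q * Q) $$ (k,k') = (\<Sum>i<l. transpose_mat Q $$ (k,i) * Q $$ (i,k'))"
    by (rule index_mult_mat_sum) (use Q \<open>k < l\<close> \<open>k' < l\<close> in auto)
  also have "\<dots> = (\<Sum>i<l. Q $$ (i,k) * Q $$ (i,k'))"
    by (rule sum.cong) (use Q \<open>k < l\<close> in auto)
  finally show ?thesis using QQ \<open>k < l\<close> \<open>k' < l\<close> by simp
qed

lemma index_spectral_decomposition:
  fixes Q :: "real mat"
  assumes Q: "Q \<in> carrier_mat l l" and "a < l" "b < l"
  shows "(Q * diag_of l lam * transpose_mat Q) $$ (a,b) = (\<Sum>k<l. lam k * Q $$ (a,k) * Q $$ (b,k))"
proof -
  have D: "diag_of l lam \<in> carrier_mat l l" by (simp add: diag_of_def)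
  have QD: "(Q * diag_of l lam) $$ (a,k) = lam k * Q $$ (a,k)" if "k < l" for k
  proof -
    have "(Q * diag_of l lam) $$ (a,k) = (\<Sum>t<l. Q $$ (a,t) * diag_of l lam $$ (t,k))"
      by (rule index_mult_mat_sum[OF Q D \<open>a < l\<close> that])
    also have "\<dots> = (\<Sum>t<l. if t = k then Q $$ (a,k) * lam k else 0)"
      by (rule sum.cong) (use that in \<open>auto simp: diag_of_def\<close>)
    finally show ?thesis using that by simp
  qed
  have "(Q * diag_of l lam * transpose_mat Q) $$ (a,b)
      = (\<Sum>k<l. (Q * diag_of l lam) $$ (a,k) * transpose_mat Q $$ (k,b))"
    by (rule index_mult_mat_sum) (use Q D \<open>a < l\<close> \<open>b < l\<close> in auto)
  also have "\<dots> = (\<Sum>k<l. lam k * Q $$ (a,k) * Q $$ (b,k))"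
    by (rule sum.cong) (use QD Q \<open>b < l\<close> in auto)
  finally show ?thesis .
qed

text \<open>The trace of a matrix with unit diagonal is its size, so its largest eigenvalue is at least 1.\<close>

lemma largest_eigenvalue_ge_one_if_unit_diagonal:
  fixes Q :: "real mat"
  assumes Q: "Q \<in> carrier_mat l l" and QQ: "transpose_mat Q * Q = 1\<^sub>m l"
    and diag: "\<forall>a<l. (Q * diag_of l lam * transpose_mat Q) $$ (a,a) = 1"
    and sorted: "\<forall>i j. i \<le> j \<and> j < l \<longrightarrow> lam j \<le> lam i" and "0 < l"
  shows "1 \<le> lam 0"
proof -
  have "real l = (\<Sum>a<l. \<Sum>k<l. lam k * (Q $$ (a,k) * Q $$ (a,k)))"
    using diag by (simp add: index_spectral_decomposition[OF Q] mult.assoc)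
  also have "\<dots> = (\<Sum>k<l. lam k * (\<Sum>a<l. Q $$ (a,k) * Q $$ (a,k)))"
    by (subst sum.swap) (simp add: sum_distrib_left)
  also have "\<dots> = (\<Sum>k<l. lam k)"
    by (rule sum.cong) (simp_all add: orthonormal_columns_if_transpose_mult[OF Q QQ])
  also have "\<dots> \<le> (\<Sum>k<l. lam 0)" by (rule sum_mono) (use sorted in auto)
  finally show ?thesis using \<open>0 < l\<close> by simp
qed

lemma sorted_tail_negative:
  fixes lam :: "nat \<Rightarrow> real"
  assumes sorted: "\<forall>i j. i \<le> j \<and> j < l \<longrightarrow> lam j \<le> lam i"
    and neg: "d \<le> card {i. i < l \<and> lam i < 0}" and "l - d \<le> k" "k < l"
  shows "lam k < 0"
proof (rule ccontr)
  assume "\<not> lam k < 0"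
  then have "{i. i < l \<and> lam i < 0} \<subseteq> {k<..<l}"
    using sorted \<open>k < l\<close> by (force simp: not_less)
  then have "card {i. i < l \<and> lam i < 0} \<le> l - Suc k"
    using card_mono[of "{k<..<l}"] by fastforce
  with neg \<open>l - d \<le> k\<close> \<open>k < l\<close> show False by linarith
qed

text \<open>Column j of X_L uses eigenvector number lhydra_col l d j, and X_N is A_N times
  lhydra_XN_factor, the matrix [q_1 / sqrt lam_1, - q_(l-d+1) / sqrt (- lam_(l-d+1)), ...] of Step 3.\<close>

definition lhydra_col :: "nat \<Rightarrow> nat \<Rightarrow> nat \<Rightarrow> nat" where
  "lhydra_col l d j = (if j = 0 then 0 else neg_idx l d j)"

definition lhydra_XL :: "nat \<Rightarrow> nat \<Rightarrow> real mat \<Rightarrow> (nat \<Rightarrow> real) \<Rightarrow> real mat" where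
  "lhydra_XL l d Q lam =
     mat l (d+1) (\<lambda>(i,j). sqrt \<bar>lam (lhydra_col l d j)\<bar> * Q $$ (i, lhydra_col l d j))"

definition lhydra_XN_factor :: "nat \<Rightarrow> nat \<Rightarrow> real mat \<Rightarrow> (nat \<Rightarrow> real) \<Rightarrow> real mat" where
  "lhydra_XN_factor l d Q lam =
     mat l (d+1) (\<lambda>(i,j). lorentz_sign j * Q $$ (i, lhydra_col l d j) / sqrt \<bar>lam (lhydra_col l d j)\<bar>)"

lemma lhydra_XL_carrier: "lhydra_XL l d Q lam \<in> carrier_mat l (d+1)"
  by (simp add: lhydra_XL_def)

lemma lhydra_XN_factor_carrier: "lhydra_XN_factor l d Q lam \<in> carrier_mat l (d+1)"
  by (simp add: lhydra_XN_factor_def)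

lemma lhydra_col_in_tail:
  "0 < j \<Longrightarrow> j < d + 1 \<Longrightarrow> d + 1 \<le> l \<Longrightarrow> l - d \<le> lhydra_col l d j \<and> lhydra_col l d j < l"
  by (simp add: lhydra_col_def neg_idx_def) arith

lemma lhydra_col_eigenvalue_nonzero:
  fixes lam :: "nat \<Rightarrow> real"
  assumes dl: "d + 1 \<le> l" and "0 < lam 0" and tail: "\<forall>k. l - d \<le> k \<and> k < l \<longrightarrow> lam k < 0"
  shows "\<forall>j<d+1. lam (lhydra_col l d j) \<noteq> 0"
proof (intro allI impI)
  fix j assume "j < d + 1"
  show "lam (lhydra_col l d j) \<noteq> 0"
  proof (cases "j = 0")
    case True
    then show ?thesis using \<open>0 < lam 0\<close> by (simp add: lhydra_col_def)
  next
    case False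
    then show ?thesis using tail lhydra_col_in_tail[OF _ \<open>j < d + 1\<close> dl] by force
  qed
qed

lemma bij_betw_lhydra_col:
  assumes "d + 1 \<le> l"
  shows "bij_betw (lhydra_col l d) {..<d+1} (insert 0 {l-d..<l})"
proof (rule bij_betw_imageI)
  show "inj_on (lhydra_col l d) {..<d+1}"
    by (rule inj_onI) (use assms in \<open>auto simp: lhydra_col_def neg_idx_def split: if_splits\<close>)
  show "lhydra_col l d ` {..<d+1} = insert 0 {l-d..<l}"
  proof (intro equalityI subsetI)
    fix k assume "k \<in> insert 0 {l-d..<l}"
    then have "k = lhydra_col l d (if k = 0 then 0 else k - (l - d - 1))"
      "(if k = 0 then 0 else k - (l - d - 1)) < d + 1"
      using assms by (auto simp: lhydra_col_def neg_idx_def)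
    then show "k \<in> lhydra_col l d ` {..<d+1}" by blast
  qed (use assms in \<open>auto simp: lhydra_col_def neg_idx_def\<close>)
qed

lemma lhydra_eq_Some:
  assumes "DL \<in> carrier_mat l l" "d + 1 \<le> l" "0 \<le> lam 0"
    and tail: "\<forall>k. l - d \<le> k \<and> k < l \<longrightarrow> lam k < 0"
  shows "lhydra DL DN d \<kappa> Q lam
      = Some (lhydra_XL l d Q lam, cosh_mat \<kappa> DN * lhydra_XN_factor l d Q lam)"
proof -
  have "\<bar>lam (neg_idx l d j)\<bar> = - lam (neg_idx l d j)" if "0 < j" "j < d + 1" for j
    using tail[rule_format, of "neg_idx l d j"] that assms(2) by (simp add: neg_idx_def, linarith)
  then show ?thesis
    using assms
    by (auto simp: lhydra_def Let_def lhydra_XL_def lhydra_XN_factor_def lhydra_col_def lorentz_sign_def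
        intro!: eq_matI)
qed

lemma lhydra_XL_lorentz_gram:
  fixes lam :: "nat \<Rightarrow> real"
  assumes dl: "d + 1 \<le> l" and head: "0 \<le> lam 0" and tail: "\<forall>k. l - d \<le> k \<and> k < l \<longrightarrow> lam k \<le> 0"
    and "a < l" "b < l"
  shows "(\<Sum>j<d+1. lorentz_sign j * lhydra_XL l d Q lam $$ (a,j) * lhydra_XL l d Q lam $$ (b,j))
       = (\<Sum>k\<in>insert 0 {l-d..<l}. lam k * Q $$ (a,k) * Q $$ (b,k))"
proof -
  define col where "col = lhydra_col l d"
  have "lorentz_sign j * lhydra_XL l d Q lam $$ (a,j) * lhydra_XL l d Q lam $$ (b,j)
      = lam (col j) * Q $$ (a, col j) * Q $$ (b, col j)" if "j < d+1" for j
  proof -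
    have "lorentz_sign j * \<bar>lam (col j)\<bar> = lam (col j)"
    proof (cases "j = 0")
      case True
      then show ?thesis using head by (simp add: lorentz_sign_def col_def lhydra_col_def)
    next
      case False
      then have "lam (col j) \<le> 0"
        using tail lhydra_col_in_tail[OF _ that dl] by (force simp: col_def)
      then show ?thesis using False by (simp add: lorentz_sign_def)
    qed
    then show ?thesis
      using that assms(4,5) by (simp add: lhydra_XL_def col_def[symmetric] algebra_simps)
  qed
  then show ?thesis
    using sum.reindex_bij_betw[OF bij_betw_lhydra_col[OF dl], of "\<lambda>k. lam k * Q $$ (a,k) * Q $$ (b,k)"]
    by (simp add: col_def)
qed

lemma lhydra_XL_optimal:
  fixes A Q X :: "real mat" and lam :: "nat \<Rightarrow> real"
  assumes Q: "Q \<in> carrier_mat l l" and QQ: "transpose_mat Q * Q = 1\<^sub>m l"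
    and A: "A = Q * diag_of l lam * transpose_mat Q"
    and sorted: "\<forall>i j. i \<le> j \<and> j < l \<longrightarrow> lam j \<le> lam i"
    and dl: "d + 1 \<le> l" and head: "0 \<le> lam 0" and tail: "\<forall>k. l - d \<le> k \<and> k < l \<longrightarrow> lam k \<le> 0"
    and X: "X \<in> carrier_mat l (d+1)"
  defines "XL \<equiv> lhydra_XL l d Q lam"
  shows "frob_norm (A - XL * lorentz_J d * transpose_mat XL) \<le> frob_norm (A - X * lorentz_J d * transpose_mat X)"
proof -
  define R where "R = {1..<l-d}"
  have orth: "(\<Sum>i<l. Q $$ (i,k) * Q $$ (i,k')) = (if k = k' then 1 else 0)" if "k < l" "k' < l" for k k'
    using orthonormal_columns_if_transpose_mult[OF Q QQ that] .
  have A_entry: "A $$ (a,b) = (\<Sum>k<l. lam k * Q $$ (a,k) * Q $$ (b,k))" if "a < l" "b < l" for a b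
    unfolding A by (rule index_spectral_decomposition[OF Q that])
  have Ac: "A \<in> carrier_mat l l" using Q unfolding A diag_of_def by (intro mult_carrier_mat) auto
  have XLc: "XL \<in> carrier_mat l (d+1)" unfolding XL_def by (rule lhydra_XL_carrier)
  \<comment> \<open>L-hydra removes exactly the eigenvalues it uses, leaving the spectral sum over R.\<close>
  have residual: "A $$ (a,b) - (\<Sum>j<d+1. lorentz_sign j * XL $$ (a,j) * XL $$ (b,j))
      = (\<Sum>k\<in>R. lam k * Q $$ (a,k) * Q $$ (b,k))" if ab: "a < l" "b < l" for a b
  proof -
    have "{..<l} = R \<union> insert 0 {l-d..<l}" using dl by (auto simp: R_def)
    then have "(\<Sum>k<l. lam k * Q $$ (a,k) * Q $$ (b,k))
        = (\<Sum>k\<in>R. lam k * Q $$ (a,k) * Q $$ (b,k)) + (\<Sum>k\<in>insert 0 {l-d..<l}. lam k * Q $$ (a,k) * Q $$ (b,k))"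
      by (simp only:) (rule sum.union_disjoint; auto simp: R_def)
    then show ?thesis
      unfolding A_entry[OF ab] XL_def lhydra_XL_lorentz_gram[OF dl head tail ab] by simp
  qed
  have "(\<Sum>k\<in>R. (lam k)\<^sup>2)
      \<le> (\<Sum>a<l. \<Sum>b<l. (A $$ (a,b) - (\<Sum>j<d+1. lorentz_sign j * X $$ (a,j) * X $$ (b,j)))\<^sup>2)"
    unfolding R_def using lorentz_gram_frobenius_lower_bound[OF orth sorted, of d "\<lambda>a j. X $$ (a,j)"]
    by (simp add: A_entry)
  moreover have "(\<Sum>a<l. \<Sum>b<l. (A $$ (a,b) - (\<Sum>j<d+1. lorentz_sign j * XL $$ (a,j) * XL $$ (b,j)))\<^sup>2)
      = (\<Sum>k\<in>R. (lam k)\<^sup>2)"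
  proof -
    have "(\<Sum>a<l. \<Sum>b<l. (A $$ (a,b) - (\<Sum>j<d+1. lorentz_sign j * XL $$ (a,j) * XL $$ (b,j)))\<^sup>2)
        = (\<Sum>a<l. \<Sum>b<l. (\<Sum>k\<in>R. lam k * Q $$ (a,k) * Q $$ (b,k))\<^sup>2)"
      by (intro sum.cong refl) (simp only: lessThan_iff residual)
    also have "\<dots> = (\<Sum>k\<in>R. (lam k)\<^sup>2)"
      by (rule sum_sq_spectral_sum) (auto simp: R_def orth)
    finally show ?thesis .
  qed
  ultimately show ?thesis
    unfolding frob_norm_minus_lorentz_form[OF Ac XLc XLc] frob_norm_minus_lorentz_form[OF Ac X X]
    by simp
qed

lemma lhydra_XN_lorentz_gram:
  fixes AN :: "real mat" and lam :: "nat \<Rightarrow> real"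
  assumes nonzero: "\<forall>j<d+1. lam (lhydra_col l d j) \<noteq> 0"
    and AN: "AN \<in> carrier_mat m l" and "i < m" "t < l"
  shows "(\<Sum>j<d+1. lorentz_sign j * (AN * lhydra_XN_factor l d Q lam) $$ (i,j) * lhydra_XL l d Q lam $$ (t,j))
       = (\<Sum>j<d+1. (\<Sum>t'<l. AN $$ (i,t') * Q $$ (t', lhydra_col l d j)) * Q $$ (t, lhydra_col l d j))"
proof (rule sum.cong)
  fix j assume "j \<in> {..<d+1}"
  then have j: "j < d + 1" by simp
  define col where "col = lhydra_col l d j"
  define s where "s = sqrt \<bar>lam col\<bar>"
  have "s \<noteq> 0" using nonzero j by (simp add: s_def col_def)
  have "(AN * lhydra_XN_factor l d Q lam) $$ (i,j)
      = (\<Sum>t'<l. AN $$ (i,t') * lhydra_XN_factor l d Q lam $$ (t',j))"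
    by (rule index_mult_mat_sum[OF AN lhydra_XN_factor_carrier \<open>i < m\<close> j])
  also have "\<dots> = (\<Sum>t'<l. lorentz_sign j * (AN $$ (i,t') * Q $$ (t', col)) / s)"
    by (rule sum.cong) (use j in \<open>auto simp: lhydra_XN_factor_def s_def col_def\<close>)
  finally have "(AN * lhydra_XN_factor l d Q lam) $$ (i,j)
      = lorentz_sign j * (\<Sum>t'<l. AN $$ (i,t') * Q $$ (t', col)) / s"
    by (simp add: sum_divide_distrib[symmetric] sum_distrib_left[symmetric])
  moreover have "lhydra_XL l d Q lam $$ (t,j) = s * Q $$ (t, col)"
    using j \<open>t < l\<close> by (simp add: lhydra_XL_def s_def col_def)
  ultimately show "lorentz_sign j * (AN * lhydra_XN_factor l d Q lam) $$ (i,j) * lhydra_XL l d Q lam $$ (t,j)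
      = (\<Sum>t'<l. AN $$ (i,t') * Q $$ (t', lhydra_col l d j)) * Q $$ (t, lhydra_col l d j)"
    using \<open>s \<noteq> 0\<close> by (simp add: col_def lorentz_sign_def)
qed simp

lemma lhydra_XN_optimal:
  fixes Q AN X :: "real mat" and lam :: "nat \<Rightarrow> real"
  assumes Q: "Q \<in> carrier_mat l l" and QQ: "transpose_mat Q * Q = 1\<^sub>m l"
    and dl: "d + 1 \<le> l" and nonzero: "\<forall>j<d+1. lam (lhydra_col l d j) \<noteq> 0"
    and AN: "AN \<in> carrier_mat m l" and X: "X \<in> carrier_mat m (d+1)"
  defines "XL \<equiv> lhydra_XL l d Q lam" and "XN \<equiv> AN * lhydra_XN_factor l d Q lam"
  shows "frob_norm (AN - XN * lorentz_J d * transpose_mat XL) \<le> frob_norm (AN - X * lorentz_J d * transpose_mat XL)"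
proof -
  define col where "col = lhydra_col l d"
  have XLc: "XL \<in> carrier_mat l (d+1)" unfolding XL_def by (rule lhydra_XL_carrier)
  have XNc: "XN \<in> carrier_mat m (d+1)" using AN lhydra_XN_factor_carrier by (simp add: XN_def)
  have col: "col j < l" if "j < d+1" for j
    using bij_betw_apply[OF bij_betw_lhydra_col[OF dl]] that dl by (force simp: col_def)
  have orth: "\<forall>j\<in>{..<d+1}. \<forall>j'\<in>{..<d+1}.
      (\<Sum>t\<in>{..<l}. Q $$ (t, col j) * Q $$ (t, col j')) = (if j = j' then 1 else 0)"
    using orthonormal_columns_if_transpose_mult[OF Q QQ] col
      bij_betw_imp_inj_on[OF bij_betw_lhydra_col[OF dl]]
    by (auto simp: col_def inj_on_eq_iff)
  \<comment> \<open>Row by row, XN J XL^T is the orthogonal projection of AN onto the columns of Q that L-hydra uses.\<close>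
  have "(\<Sum>t<l. (AN $$ (i,t) - (\<Sum>j<d+1. lorentz_sign j * XN $$ (i,j) * XL $$ (t,j)))\<^sup>2)
      \<le> (\<Sum>t<l. (AN $$ (i,t) - (\<Sum>j<d+1. lorentz_sign j * X $$ (i,j) * XL $$ (t,j)))\<^sup>2)"
    if i: "i < m" for i
  proof -
    define \<beta> where "\<beta> j = lorentz_sign j * X $$ (i,j) * sqrt \<bar>lam (col j)\<bar>" for j
    have X_comb: "(\<Sum>j<d+1. lorentz_sign j * X $$ (i,j) * XL $$ (t,j)) = (\<Sum>j<d+1. \<beta> j * Q $$ (t, col j))"
      if "t < l" for t
      by (rule sum.cong) (use that in \<open>auto simp: XL_def lhydra_XL_def \<beta>_def col_def\<close>)
    have "(\<Sum>t<l. (AN $$ (i,t) - (\<Sum>j<d+1. lorentz_sign j * XN $$ (i,j) * XL $$ (t,j)))\<^sup>2)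
        = (\<Sum>t<l. (AN $$ (i,t) - (\<Sum>j<d+1. (\<Sum>t'<l. AN $$ (i,t') * Q $$ (t', col j)) * Q $$ (t, col j)))\<^sup>2)"
      unfolding XN_def XL_def col_def
      by (rule sum.cong) (simp_all only: lessThan_iff lhydra_XN_lorentz_gram[OF nonzero AN i])
    also have "\<dots> \<le> (\<Sum>t<l. (AN $$ (i,t) - (\<Sum>j<d+1. \<beta> j * Q $$ (t, col j)))\<^sup>2)"
      by (rule orthonormal_projection_least_squares[OF _ orth]) simp
    also have "\<dots> = (\<Sum>t<l. (AN $$ (i,t) - (\<Sum>j<d+1. lorentz_sign j * X $$ (i,j) * XL $$ (t,j)))\<^sup>2)"
      by (rule sum.cong) (simp_all only: lessThan_iff X_comb)
    finally show ?thesis .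
  qed
  then show ?thesis
    unfolding frob_norm_minus_lorentz_form[OF AN XNc XLc] frob_norm_minus_lorentz_form[OF AN X XLc]
    by (rule real_sqrt_le_mono[OF sum_mono]) simp
qed

lemma lhydra_first_columns_pos:
  fixes Q AN :: "real mat"
  assumes Q_pos: "\<forall>i<l. 0 < Q $$ (i,0)" and lam: "0 < lam 0" and "0 < l"
    and AN: "AN \<in> carrier_mat m l" and AN_pos: "\<forall>i<m. \<forall>t<l. 0 < AN $$ (i,t)"
  shows "\<forall>i<l. 0 < lhydra_XL l d Q lam $$ (i,0)"
    and "\<forall>i<m. 0 < (AN * lhydra_XN_factor l d Q lam) $$ (i,0)"
proof -
  show "\<forall>i<l. 0 < lhydra_XL l d Q lam $$ (i,0)"
    using Q_pos lam by (simp add: lhydra_XL_def lhydra_col_def)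
  show "\<forall>i<m. 0 < (AN * lhydra_XN_factor l d Q lam) $$ (i,0)"
  proof (intro allI impI)
    fix i assume "i < m"
    have "0 < (\<Sum>t<l. AN $$ (i,t) * lhydra_XN_factor l d Q lam $$ (t,0))"
      using AN_pos Q_pos lam \<open>i < m\<close> \<open>0 < l\<close>
      by (intro sum_pos) (auto simp: lhydra_XN_factor_def lhydra_col_def lorentz_sign_def)
    then show "0 < (AN * lhydra_XN_factor l d Q lam) $$ (i,0)"
      using index_mult_mat_sum[OF AN lhydra_XN_factor_carrier \<open>i < m\<close>] by simp
  qed
qed

theorem theorem2:
  fixes DL DN :: "real mat" and l m d :: nat and \<kappa> :: real
    and Q :: "real mat" and lam :: "nat \<Rightarrow> real"
  assumes DL: "DL \<in> carrier_mat l l" "transpose_mat DL = DL"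
      "\<forall>i<l. DL $$ (i,i) = 0" "\<forall>i<l. \<forall>j<l. DL $$ (i,j) \<ge> 0"
    and DN: "DN \<in> carrier_mat m l" "\<forall>i<m. \<forall>j<l. DN $$ (i,j) \<ge> 0"
    and d: "d \<ge> 1" and kappa: "\<kappa> > 0"
    and eig: "lhydra_eigdecomp l (cosh_mat \<kappa> DL) Q lam"
    and neg: "card {i. i < l \<and> lam i < 0} \<ge> d"
  shows "\<exists>XL XN. lhydra DL DN d \<kappa> Q lam = Some (XL, XN) \<and>
    XL \<in> carrier_mat l (d+1) \<and> XN \<in> carrier_mat m (d+1) \<and>
    (\<forall>X \<in> carrier_mat l (d+1).
       frob_norm (cosh_mat \<kappa> DL - XL * lorentz_J d * transpose_mat XL)
       \<le> frob_norm (cosh_mat \<kappa> DL - X * lorentz_J d * transpose_mat X)) \<and>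
    (\<forall>X \<in> carrier_mat m (d+1).
       frob_norm (cosh_mat \<kappa> DN - XN * lorentz_J d * transpose_mat XL)
       \<le> frob_norm (cosh_mat \<kappa> DN - X * lorentz_J d * transpose_mat XL)) \<and>
    (\<forall>i<l. XL $$ (i,0) > 0) \<and> (\<forall>i<m. XN $$ (i,0) > 0)"
proof -
  have Q: "Q \<in> carrier_mat l l" and QQ: "transpose_mat Q * Q = 1\<^sub>m l"
    and A: "cosh_mat \<kappa> DL = Q * diag_of l lam * transpose_mat Q"
    and sorted: "\<forall>i j. i \<le> j \<and> j < l \<longrightarrow> lam j \<le> lam i" and Q_pos: "\<forall>i<l. 0 < Q $$ (i,0)"
    using eig unfolding lhydra_eigdecomp_def by auto
  have "0 < l" using neg d by (cases l) auto
  have "1 \<le> lam 0"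
    using largest_eigenvalue_ge_one_if_unit_diagonal[OF Q QQ _ sorted \<open>0 < l\<close>] DL(1,3)
    by (simp add: A[symmetric] cosh_mat_def)
  have tail: "\<forall>k. l - d \<le> k \<and> k < l \<longrightarrow> lam k < 0"
    using sorted_tail_negative[OF sorted neg] by blast
  have dl: "d + 1 \<le> l" using tail[rule_format, of 0] \<open>0 < l\<close> \<open>1 \<le> lam 0\<close> by linarith
  have nonzero: "\<forall>j<d+1. lam (lhydra_col l d j) \<noteq> 0"
    using lhydra_col_eigenvalue_nonzero[OF dl _ tail] \<open>1 \<le> lam 0\<close> by simp
  have AN: "cosh_mat \<kappa> DN \<in> carrier_mat m l" and AN_pos: "\<forall>i<m. \<forall>t<l. 0 < cosh_mat \<kappa> DN $$ (i,t)"
    using DN(1) by (simp_all add: cosh_mat_def)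
  have tail_nonpos: "\<forall>k. l - d \<le> k \<and> k < l \<longrightarrow> lam k \<le> 0" using tail by auto
  show ?thesis
    using lhydra_eq_Some[OF DL(1) dl _ tail] lhydra_XL_optimal[OF Q QQ A sorted dl _ tail_nonpos]
      lhydra_XN_optimal[OF Q QQ dl nonzero AN] lhydra_first_columns_pos[OF Q_pos _ \<open>0 < l\<close> AN]
      AN_pos \<open>1 \<le> lam 0\<close> AN lhydra_XL_carrier lhydra_XN_factor_carrier
    by (intro exI conjI ballI) auto
qed

end
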